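(* Let $(X,\kappa)$ be a finite digital image which is strongly contractible, i.e. $\mathrm{id}_X$ is strongly homotopic to a constant map. Then every continuous map $f:X\to X$ has a fixed point or at least two approximate fixed points.
   Context: A digital image is a pair $(X,\kappa)$ where $X$ is a set and $\kappa$ is a symmetric irreflexive relation on $X$ (the adjacency). Write $x\leftrightarrow y$ if adjacent, $x\Leftrightarrow y$ if adjacent or equal. A map $f$ is continuous if $x\leftrightarrow y$ implies $f(x)\Leftrightarrow f(y)$. A point $x$ is an approximate fixed point of $f:X\to X$ if $f(x)\Leftrightarrow x$. The digital interval $[0,m]_{\mathbb Z}$ has consecutive integers adjacent. Continuous $f,g:X\to Y$ are strongly homotopic ($f\simeq^* g$) if there exist $m\ge1$ and $H:X\times[0,m]_{\mathbb Z}\to Y$ with $H(\cdot,0)=f$, $H(\cdot,m)=g$, such that whenever $(x,t)\neq(x',t')$, $x\Leftrightarrow x'$ and $|t-t'|\le1$, we have $H(x,t)\Leftrightarrow H(x',t')$. *)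

theory Defs
  imports Main
begin

definition digital_image :: "'a set \<Rightarrow> ('a \<Rightarrow> 'a \<Rightarrow> bool) \<Rightarrow> bool" where
  "digital_image X adj \<longleftrightarrow>
     (\<forall>x\<in>X. \<forall>y\<in>X. adj x y \<longrightarrow> adj y x) \<and> (\<forall>x\<in>X. \<not> adj x x)"

definition adj_eq :: "('a \<Rightarrow> 'a \<Rightarrow> bool) \<Rightarrow> 'a \<Rightarrow> 'a \<Rightarrow> bool" where
  "adj_eq adj x y \<longleftrightarrow> adj x y \<or> x = y"

definition digitally_continuous ::
  "'a set \<Rightarrow> ('a \<Rightarrow> 'a \<Rightarrow> bool) \<Rightarrow> 'b set \<Rightarrow> ('b \<Rightarrow> 'b \<Rightarrow> bool) \<Rightarrow> ('a \<Rightarrow> 'b) \<Rightarrow> bool" where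
  "digitally_continuous X adjX Y adjY f \<longleftrightarrow>
     f ` X \<subseteq> Y \<and> (\<forall>x\<in>X. \<forall>y\<in>X. adjX x y \<longrightarrow> adj_eq adjY (f x) (f y))"

definition approx_fixed_point :: "('a \<Rightarrow> 'a \<Rightarrow> bool) \<Rightarrow> ('a \<Rightarrow> 'a) \<Rightarrow> 'a \<Rightarrow> bool" where
  "approx_fixed_point adj f x \<longleftrightarrow> adj_eq adj (f x) x"

definition strongly_homotopic ::
  "'a set \<Rightarrow> ('a \<Rightarrow> 'a \<Rightarrow> bool) \<Rightarrow> 'b set \<Rightarrow> ('b \<Rightarrow> 'b \<Rightarrow> bool) \<Rightarrow> ('a \<Rightarrow> 'b) \<Rightarrow> ('a \<Rightarrow> 'b) \<Rightarrow> bool" where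
  "strongly_homotopic X adjX Y adjY f g \<longleftrightarrow>
     digitally_continuous X adjX Y adjY f \<and> digitally_continuous X adjX Y adjY g \<and>
     (\<exists>(m::nat) (H :: 'a \<Rightarrow> nat \<Rightarrow> 'b). m \<ge> 1 \<and>
        (\<forall>x\<in>X. \<forall>t\<le>m. H x t \<in> Y) \<and>
        (\<forall>x\<in>X. H x 0 = f x) \<and> (\<forall>x\<in>X. H x m = g x) \<and>
        (\<forall>x\<in>X. \<forall>x'\<in>X. \<forall>t\<le>m. \<forall>t'\<le>m.
           (x, t) \<noteq> (x', t') \<and> adj_eq adjX x x' \<and> (t \<le> t' + 1 \<and> t' \<le> t + 1)
           \<longrightarrow> adj_eq adjY (H x t) (H x' t')))"

definition strongly_contractible :: "'a set \<Rightarrow> ('a \<Rightarrow> 'a \<Rightarrow> bool) \<Rightarrow> bool" where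
  "strongly_contractible X adj \<longleftrightarrow>
     (\<exists>c\<in>X. strongly_homotopic X adj X adj id (\<lambda>_. c))"

end

theory Submission
  imports Defs
begin

text \<open>Let \<open>H\<close> be a strong homotopy from \<open>id\<close> to \<open>g\<close> and put \<open>f\<^sub>t x = H (f x) t\<close>, so
  \<open>f\<^sub>0 = f\<close> and \<open>f\<^sub>m = g \<circ> f\<close>. If \<open>p\<close> is an approximate fixed point of \<open>f\<^sub>t\<^sub>+\<^sub>1\<close>, then
  \<open>f\<^sub>t\<^sub>+\<^sub>1 p\<close> is one of \<open>f\<^sub>t\<close>, because strong homotopies are continuous in space and time
  jointly. Walking down from \<open>t = m\<close>, where a constant map has a fixed point, gives an
  approximate fixed point \<open>x\<close> of \<open>f\<close>; if \<open>f x \<noteq> x\<close>, continuity makes \<open>f x\<close> a second one.\<close>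

lemma digitally_continuous_adj_eq:
  assumes "digitally_continuous X adjX Y adjY f" "x \<in> X" "y \<in> X" "adj_eq adjX x y"
  shows "adj_eq adjY (f x) (f y)"
  using assms unfolding digitally_continuous_def adj_eq_def by blast

lemma approx_fixed_point_image:
  assumes "digitally_continuous X adj X adj f" "x \<in> X" "approx_fixed_point adj f x"
  shows "approx_fixed_point adj f (f x)"
proof -
  have "f x \<in> X" using assms(1,2) unfolding digitally_continuous_def by blast
  with assms show ?thesis
    unfolding approx_fixed_point_def by (blast intro: digitally_continuous_adj_eq)
qed

lemma strongly_homotopic_id_approx_fixed_point:
  assumes "strongly_homotopic X adj X adj id g"
    and f: "digitally_continuous X adj X adj f"
    and "p \<in> X" "approx_fixed_point adj (g \<circ> f) p"
  shows "\<exists>x\<in>X. approx_fixed_point adj f x"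
proof -
  obtain m :: nat and H where HX: "\<forall>x\<in>X. \<forall>t\<le>m. H x t \<in> X"
    and H0: "\<forall>x\<in>X. H x 0 = x" and Hm: "\<forall>x\<in>X. H x m = g x"
    and Hadj: "\<forall>x\<in>X. \<forall>x'\<in>X. \<forall>t\<le>m. \<forall>t'\<le>m.
        (x, t) \<noteq> (x', t') \<and> adj_eq adj x x' \<and> (t \<le> t' + 1 \<and> t' \<le> t + 1)
        \<longrightarrow> adj_eq adj (H x t) (H x' t')"
    using assms(1) unfolding strongly_homotopic_def by (elim conjE exE) (rule that; simp)
  have fX: "f x \<in> X" if "x \<in> X" for x
    using f that unfolding digitally_continuous_def by blast
  have step: "adj_eq adj (H (f z) t) z"
    if "Suc t \<le> m" "y \<in> X" "adj_eq adj (H (f y) (Suc t)) y" and z: "z = H (f y) (Suc t)"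
    for y z t
  proof -
    have "z \<in> X" using HX fX that by simp
    then have "adj_eq adj (f z) (f y)"
      using digitally_continuous_adj_eq[OF f \<open>z \<in> X\<close> \<open>y \<in> X\<close>] that(3) z by simp
    then have "adj_eq adj (H (f z) t) (H (f y) (Suc t))"
      using Hadj[rule_format, of "f z" "f y" t "Suc t"] fX \<open>z \<in> X\<close> \<open>y \<in> X\<close> \<open>Suc t \<le> m\<close>
      by simp
    then show ?thesis using z by simp
  qed
  have "\<exists>p\<in>X. adj_eq adj (H (f p) (m - k)) p" if "k \<le> m" for k
    using that
  proof (induction k)
    case 0
    then show ?case
      using assms(3,4) Hm fX[OF assms(3)] unfolding approx_fixed_point_def
      by (intro bexI[of _ p]) simp_all
  next
    case (Suc k)
    define t where "t = m - Suc k"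
    have t: "Suc t \<le> m" "m - k = Suc t" "m - Suc k = t"
      using Suc.prems unfolding t_def by auto
    then obtain p where p: "p \<in> X" "adj_eq adj (H (f p) (Suc t)) p"
      using Suc by auto
    have "adj_eq adj (H (f (H (f p) (Suc t))) t) (H (f p) (Suc t))"
      using step[OF t(1) p refl] .
    moreover have "H (f p) (Suc t) \<in> X"
      using HX fX p(1) t(1) by simp
    ultimately show ?case using t(3) by blast
  qed
  from this[of m] obtain x where "x \<in> X" "adj_eq adj (H (f x) 0) x"
    by auto
  then show ?thesis
    using H0 fX unfolding approx_fixed_point_def by auto
qed

lemma strongly_contractible_approx_fixed_point:
  assumes "strongly_contractible X adj" "digitally_continuous X adj X adj f"
  shows "\<exists>x\<in>X. approx_fixed_point adj f x"
proof -
  obtain c where c: "c \<in> X" and h: "strongly_homotopic X adj X adj id (\<lambda>_. c)"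
    using assms(1) unfolding strongly_contractible_def by blast
  have "approx_fixed_point adj ((\<lambda>_. c) \<circ> f) c"
    by (simp add: approx_fixed_point_def adj_eq_def)
  from strongly_homotopic_id_approx_fixed_point[OF h assms(2) c this] show ?thesis .
qed

theorem theorem3p7:
  fixes X :: "'a set" and adj :: "'a \<Rightarrow> 'a \<Rightarrow> bool" and f :: "'a \<Rightarrow> 'a"
  assumes "digital_image X adj"
    and "finite X"
    and "strongly_contractible X adj"
    and "digitally_continuous X adj X adj f"
  shows "(\<exists>x\<in>X. f x = x) \<or>
         (\<exists>x\<in>X. \<exists>y\<in>X. x \<noteq> y \<and> approx_fixed_point adj f x \<and> approx_fixed_point adj f y)"
proof -
  obtain x where x: "x \<in> X" "approx_fixed_point adj f x"
    using strongly_contractible_approx_fixed_point[OF assms(3,4)] by blast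
  have "f x \<in> X" using assms(4) x(1) unfolding digitally_continuous_def by blast
  moreover have "approx_fixed_point adj f (f x)"
    using approx_fixed_point_image[OF assms(4) x] .
  ultimately show ?thesis using x by blast
qed

end
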